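(* Let $X$ be a topological space and let $(x_n)_{n\in\omega}$ be a sequence of pairwise distinct points of $X$ such that the subspace $\{x_n : n\in\omega\}$ is homeomorphic to $\mathbb{Q}$. Fix a metric $d$ on $\{x_n:n\in\omega\}$ compatible with its subspace topology. Call $A\subseteq\omega$ scattered if there is no $B\subseteq A$ such that the subspace $\{x_n:n\in B\}$ is homeomorphic to $\mathbb{Q}$; let $\mathcal{I}$ be the family of scattered subsets of $\omega$ and $\mathcal{I}^+=\mathcal{P}(\omega)\setminus\mathcal{I}$. For $i,j\in\omega$ let $A_{i,j}=\{n\in\omega : d(x_n,x_i)<\frac{1}{j+1}\}$. Then: (1) for every $A\subseteq\omega$, $A\in\mathcal{I}^+$ if and only if there exists a nonempty $B\subseteq A$ such that for all $i\in B$ and all $j\in\omega$ there is $n\in B\cap A_{i,j}$ with $n\neq i$; (2) for every $A\in\mathcal{I}^+$ there exists $B\subseteq A$ with $B\in\mathcal{I}^+$ such that $B\cap A_{i,j}\in\mathcal{I}^+$ for all $i\in B$ and all $j\in\omega$.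
   Context: $\omega$ denotes the set of natural numbers and $\mathcal{P}(\omega)$ its power set. $\mathbb{Q}$ carries its usual topology. *)

theory Defs
  imports "HOL-Analysis.Analysis"
begin

definition scattered_idx :: "'a topology \<Rightarrow> (nat \<Rightarrow> 'a) \<Rightarrow> nat set \<Rightarrow> bool" where
  "scattered_idx X x A \<longleftrightarrow>
     \<not> (\<exists>B\<subseteq>A. subtopology X (x ` B) homeomorphic_space top_of_set (\<rat> :: real set))"

definition scat_ideal :: "'a topology \<Rightarrow> (nat \<Rightarrow> 'a) \<Rightarrow> nat set set" where
  "scat_ideal X x = {A. scattered_idx X x A}"

definition scat_plus :: "'a topology \<Rightarrow> (nat \<Rightarrow> 'a) \<Rightarrow> nat set set" where
  "scat_plus X x = Pow UNIV - scat_ideal X x"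

definition ballA :: "('a \<Rightarrow> 'a \<Rightarrow> real) \<Rightarrow> (nat \<Rightarrow> 'a) \<Rightarrow> nat \<Rightarrow> nat \<Rightarrow> nat set" where
  "ballA d x i j = {n. d (x n) (x i) < 1 / (real j + 1)}"

end

theory Submission
  imports Defs
begin

(*
  Part (1): if x[A] contains a copy of the rationals, that copy has no isolated points. Conversely,
  every nonempty subset P of a metric space without isolated points contains a copy of the
  rationals. To see this, build a tree of balls indexed by finite integer sequences: a ball of
  radius r centred in P contains countably many pairwise disjoint balls of radius at most r/2
  centred in P, one of them concentric with it. A rational q is coded by its dyadic digits
  floor((q - xi) 2^n) for a fixed irrational xi, which are locally constant on the rationals, and
  is sent to the point in which the balls along its code shrink. To make that point a centre, at
  each node the concentric ball is attached to the next digit of the first rational (in a fixed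
  enumeration) whose code begins with that node; the centres along the code of q are then
  eventually constant, and disjointness of the balls makes the map an embedding.
  Part (2): a set without isolated points keeps this property when intersected with an open ball.
*)

definition irrational_offset :: real where
  "irrational_offset = (SOME t. t \<notin> \<rat>)"

lemma irrational_offset_not_Rats: "irrational_offset \<notin> \<rat>"
proof -
  have "\<exists>t::real. t \<notin> \<rat>"
    using countable_rat uncountable_UNIV_real by (metis UNIV_eq_I)
  then show ?thesis
    unfolding irrational_offset_def by (rule someI_ex)
qed

text \<open>Since the offset is irrational, no rational lies on the boundary of a dyadic cell, so the
  cells of rationals are locally constant.\<close>

definition dyadic_cell :: "nat \<Rightarrow> real \<Rightarrow> int" where
  "dyadic_cell n q = \<lfloor>(q - irrational_offset) * 2 ^ n\<rfloor>"

fun cell_path :: "real \<Rightarrow> nat \<Rightarrow> int list" where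
  "cell_path q 0 = []"
| "cell_path q (Suc n) = dyadic_cell n q # cell_path q n"

lemma length_cell_path [simp]: "length (cell_path q n) = n"
  by (induction n) auto

lemma ex_inverse_two_power_less: "0 < e \<Longrightarrow> \<exists>n. 1 / 2 ^ n < (e :: real)"
  using real_arch_pow_inv [of e "1/2"] by (auto simp: power_one_over)

lemma abs_diff_less_if_dyadic_cell_eq:
  assumes "dyadic_cell n a = dyadic_cell n b"
  shows "\<bar>a - b\<bar> < 1 / 2 ^ n"
proof -
  have "\<bar>(a - irrational_offset) * 2 ^ n - (b - irrational_offset) * 2 ^ n\<bar> < 1"
    using assms unfolding dyadic_cell_def by linarith
  then have "\<bar>a - b\<bar> * 2 ^ n < 1"
    by (simp add: abs_mult left_diff_distrib [symmetric])
  then show ?thesis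
    by (simp add: field_simps)
qed

lemma abs_diff_less_if_cell_path_eq:
  assumes "cell_path a n = cell_path b n" and "j < n"
  shows "\<bar>a - b\<bar> < 1 / 2 ^ j"
proof -
  have "dyadic_cell j a = dyadic_cell j b"
    using assms by (induction n) (auto simp: less_Suc_eq)
  then show ?thesis
    by (rule abs_diff_less_if_dyadic_cell_eq)
qed

lemma eventually_dyadic_cell_eq:
  assumes "q \<in> \<rat>"
  shows "\<forall>\<^sub>F y in nhds q. dyadic_cell n y = dyadic_cell n q"
proof -
  have "(q - irrational_offset) * 2 ^ n \<notin> \<int>"
  proof
    assume "(q - irrational_offset) * 2 ^ n \<in> \<int>"
    then have "(q - irrational_offset) * 2 ^ n \<in> \<rat>"
      using Ints_subset_Rats by blast
    then have "q - (q - irrational_offset) * 2 ^ n / 2 ^ n \<in> \<rat>"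
      using assms by (intro Rats_diff Rats_divide) auto
    then show False
      using irrational_offset_not_Rats by simp
  qed
  moreover have "((\<lambda>y. (y - irrational_offset) * 2 ^ n) \<longlongrightarrow> (q - irrational_offset) * 2 ^ n) (nhds q)"
    by (intro tendsto_intros filterlim_ident)
  ultimately show ?thesis
    unfolding dyadic_cell_def by (rule eventually_floor_eq [rotated])
qed

lemma eventually_cell_path_eq:
  assumes "q \<in> \<rat>"
  shows "\<forall>\<^sub>F y in nhds q. cell_path y n = cell_path q n"
proof (induction n)
  case (Suc n)
  with eventually_dyadic_cell_eq [OF assms, of n] show ?case
    by eventually_elim simp
qed simp

lemma openin_cell_path_fibre: "openin (top_of_set \<rat>) {y \<in> \<rat>. cell_path y n = s}"
  unfolding openin_euclidean_subtopology_iff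
proof (intro conjI ballI)
  fix q assume "q \<in> {y \<in> \<rat>. cell_path y n = s}"
  then have "q \<in> \<rat>" and "cell_path q n = s" by auto
  with eventually_cell_path_eq [of q n]
  show "\<exists>e>0. \<forall>y\<in>\<rat>. dist y q < e \<longrightarrow> y \<in> {y \<in> \<rat>. cell_path y n = s}"
    by (auto simp: eventually_nhds_metric)
qed auto

lemma eventually_cell_path_neq:
  assumes "a \<noteq> b"
  shows "\<forall>\<^sub>F n in sequentially. cell_path a n \<noteq> cell_path b n"
proof -
  obtain j where "1 / 2 ^ j < \<bar>a - b\<bar>"
    using ex_inverse_two_power_less [of "\<bar>a - b\<bar>"] assms by auto
  then have "\<not> \<bar>a - b\<bar> < 1 / 2 ^ j"
    by simp
  then show ?thesis
    unfolding eventually_sequentially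
    by (metis abs_diff_less_if_cell_path_eq Suc_le_lessD)
qed

definition rat_enum :: "nat \<Rightarrow> real" where
  "rat_enum = from_nat_into \<rat>"

lemma bij_rat_enum: "bij_betw rat_enum UNIV \<rat>"
  unfolding rat_enum_def by (rule bij_betw_from_nat_into [OF countable_rat Rats_infinite])

text \<open>If no rational has cell path \<open>s\<close>, the \<open>LEAST\<close> below is unspecified; only cell paths
  of rationals matter.\<close>
definition path_rat :: "int list \<Rightarrow> real" where
  "path_rat s = rat_enum (LEAST k. cell_path (rat_enum k) (length s) = s)"

definition designated_digit :: "int list \<Rightarrow> int" where
  "designated_digit s = dyadic_cell (length s) (path_rat s)"

lemma eventually_path_rat:
  assumes "q \<in> \<rat>"
  shows "\<forall>\<^sub>F n in sequentially. path_rat (cell_path q n) = q"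
proof -
  obtain k where k: "rat_enum k = q"
    using bij_rat_enum assms by (metis bij_betw_iff_bijections)
  have "\<forall>\<^sub>F n in sequentially. \<forall>i\<in>{..<k}. cell_path (rat_enum i) n \<noteq> cell_path q n"
  proof (rule eventually_ball_finite)
    show "\<forall>i\<in>{..<k}. \<forall>\<^sub>F n in sequentially. cell_path (rat_enum i) n \<noteq> cell_path q n"
      using k bij_betw_imp_inj_on [OF bij_rat_enum]
      by (metis eventually_cell_path_neq inj_eq lessThan_iff less_irrefl)
  qed simp
  then show ?thesis
  proof eventually_elim
    case (elim n)
    then have "(LEAST i. cell_path (rat_enum i) n = cell_path q n) = k"
      using k by (intro Least_equality) (auto simp: not_le)
    then show ?case
      by (simp add: path_rat_def k)
  qed
qed

lemma eventually_designated_digit: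
  assumes "q \<in> \<rat>"
  shows "\<forall>\<^sub>F n in sequentially. designated_digit (cell_path q n) = dyadic_cell n q"
  using eventually_path_rat [OF assms] by eventually_elim (simp add: designated_digit_def)

context Metric_space
begin

lemma fast_sequence_to_limit_point:
  assumes "P \<subseteq> M" and "y \<in> mtopology derived_set_of P" and "p \<in> P" and "p \<noteq> y"
  shows "\<exists>w. w 0 = p \<and> (\<forall>k. w k \<in> P \<and> d (w (Suc k)) y < d (w k) y / 3)"
proof -
  have y: "y \<in> M" "\<And>r. 0 < r \<Longrightarrow> \<exists>z\<in>P. z \<noteq> y \<and> d y z < r"
    using assms(2) by (auto simp: metric_derived_set_of)
  have "\<exists>w. \<forall>k. (w k \<in> P \<and> w k \<noteq> y \<and> (k = 0 \<longrightarrow> w k = p)) \<and> d (w (Suc k)) y < d (w k) y / 3"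
  proof (rule dependent_nat_choice)
    fix v and k :: nat assume "v \<in> P \<and> v \<noteq> y \<and> (k = 0 \<longrightarrow> v = p)"
    then have "0 < d v y / 3"
      using assms(1) y(1) by auto
    then obtain z where "z \<in> P" "z \<noteq> y" "d y z < d v y / 3"
      using y(2) by blast
    then show "\<exists>z. (z \<in> P \<and> z \<noteq> y \<and> (Suc k = 0 \<longrightarrow> z = p)) \<and> d z y < d v y / 3"
      using assms(1) commute by auto
  qed (use assms in auto)
  then show ?thesis
    by blast
qed

lemma fast_sequence_antimono:
  assumes fast: "\<And>k. d (w (Suc k)) y < d (w k) y / 3" and "j \<le> k"
  shows "d (w k) y \<le> d (w j) y"
proof -
  have "d (w (Suc k)) y \<le> d (w k) y" for k
    using fast [of k] nonneg [of "w k" y] by linarith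
  then show ?thesis
    using lift_Suc_antimono_le [of "\<lambda>k. d (w k) y", OF _ \<open>j \<le> k\<close>] by blast
qed

lemma disjoint_mballs_of_fast_sequence:
  assumes "y \<in> M" and "range w \<subseteq> M" and fast: "\<And>k. d (w (Suc k)) y < d (w k) y / 3"
  shows "disjoint_family (\<lambda>k. mball (w k) (d (w k) y / 3))"
proof -
  have "mball (w j) (d (w j) y / 3) \<inter> mball (w k) (d (w k) y / 3) = {}" if "j < k" for j k
  proof (rule equals0I)
    fix u assume u: "u \<in> mball (w j) (d (w j) y / 3) \<inter> mball (w k) (d (w k) y / 3)"
    have "d (w k) y < d (w j) y / 3"
      using fast_sequence_antimono [of w y, OF fast, of "Suc j" k] fast [of j] that by simp
    moreover have "u \<in> M" "d (w j) u < d (w j) y / 3" "d (w k) u < d (w k) y / 3"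
      using u by auto
    moreover have "d (w j) y \<le> d (w j) u + d (w k) u + d (w k) y"
      using triangle [of "w j" u y] triangle [of u "w k" y] commute [of u "w k"] assms(1,2) u by auto
    ultimately show False
      using nonneg [of "w j" y] by linarith
  qed
  then show ?thesis
    unfolding disjoint_family_on_def by (metis Int_commute UNIV_I nat_neq_iff)
qed

end

definition digit_index :: "int \<Rightarrow> int \<Rightarrow> nat" where
  "digit_index a z = (if z = a then 0 else Suc (int_encode z))"

lemma digit_index_self [simp]: "digit_index a a = 0"
  by (simp add: digit_index_def)

lemma digit_index_inject: "digit_index a z = digit_index a z' \<longleftrightarrow> z = z'"
  unfolding digit_index_def using inj_int_encode [of UNIV] by (auto dest: injD)

locale dense_in_itself_set = Metric_space M d for M :: "'a set" and d +
  fixes P :: "'a set" and root :: 'a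
  assumes dense_in_itself: "P \<subseteq> mtopology derived_set_of P" and root_in_P: "root \<in> P"
begin

lemma P_subset: "P \<subseteq> M"
  using dense_in_itself derived_set_of_subset_topspace by fastforce

definition subball_family :: "'a \<Rightarrow> real \<Rightarrow> (nat \<Rightarrow> 'a \<times> real) \<Rightarrow> bool" where
  "subball_family p r C \<longleftrightarrow> fst (C 0) = p \<and>
     (\<forall>k. fst (C k) \<in> P \<and> 0 < snd (C k) \<and> snd (C k) \<le> r / 2 \<and>
          mball (fst (C k)) (snd (C k)) \<subseteq> mball p r) \<and>
     disjoint_family (\<lambda>k. mball (fst (C k)) (snd (C k)))"

lemma subball_family_exists:
  assumes "p \<in> P" and "0 < r"
  shows "\<exists>C. subball_family p r C"
proof -
  \<comment> \<open>The subballs have radius \<open>d w\<^sub>k y / 3\<close> for a sequence \<open>w\<^sub>0 = p, w\<^sub>1, \<dots>\<close> converging to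
     some \<open>y \<noteq> p\<close> so fast that they are pairwise disjoint.\<close>
  have "\<forall>e>0. \<exists>y\<in>P. y \<noteq> p \<and> y \<in> mball p e"
    using dense_in_itself assms(1) by (auto simp: metric_derived_set_of)
  then obtain y where y: "y \<in> P" "y \<noteq> p" "d p y < r / 3"
    using assms(2) by (metis divide_pos_pos in_mball zero_less_numeral)
  then obtain w where w: "w 0 = p" "\<And>k. w k \<in> P" and fast: "\<And>k. d (w (Suc k)) y < d (w k) y / 3"
    using fast_sequence_to_limit_point [OF P_subset _ assms(1)] dense_in_itself by blast
  have wM: "range w \<subseteq> M" and yM: "y \<in> M" and pM: "p \<in> M"
    using w(2) y(1) assms(1) P_subset by auto
  have dist_le: "d (w k) y \<le> d p y" for k
    using fast_sequence_antimono [of w y, OF fast, of 0 k] w(1) by simp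
  have pos: "0 < d (w k) y" for k
    using fast [of k] nonneg [of "w (Suc k)" y] by linarith
  have inside: "mball (w k) (d (w k) y / 3) \<subseteq> mball p r" for k
  proof
    fix u assume u: "u \<in> mball (w k) (d (w k) y / 3)"
    then have "u \<in> M" "d (w k) u < d (w k) y / 3"
      by auto
    moreover have "d p u \<le> d p y + d (w k) y + d (w k) u"
      using triangle [of p y u] triangle [of y "w k" u] commute [of y "w k"] wM yM pM \<open>u \<in> M\<close>
      by fastforce
    ultimately have "d p u < r"
      using dist_le [of k] y(3) assms(2) by linarith
    then show "u \<in> mball p r"
      using pM \<open>u \<in> M\<close> by simp
  qed
  have "d (w k) y / 3 \<le> r / 2" for k
    using dist_le [of k] y(3) assms(2) by linarith
  then have "subball_family p r (\<lambda>k. (w k, d (w k) y / 3))"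
    unfolding subball_family_def
    using w pos inside disjoint_mballs_of_fast_sequence [OF yM wM fast] by simp
  then show ?thesis
    by blast
qed

definition children :: "'a \<Rightarrow> real \<Rightarrow> nat \<Rightarrow> 'a \<times> real" where
  "children p r = (SOME C. subball_family p r C)"

lemma subball_family_children: "p \<in> P \<Longrightarrow> 0 < r \<Longrightarrow> subball_family p r (children p r)"
  unfolding children_def using subball_family_exists by (rule someI_ex)

primrec tree :: "int list \<Rightarrow> 'a \<times> real" where
  "tree [] = (root, 1)"
| "tree (z # s) = children (fst (tree s)) (snd (tree s)) (digit_index (designated_digit s) z)"

definition cell_ball :: "int list \<Rightarrow> 'a set" where
  "cell_ball s = mball (fst (tree s)) (snd (tree s))"

lemma tree_bounds: "fst (tree s) \<in> P \<and> 0 < snd (tree s) \<and> snd (tree s) \<le> 1 / 2 ^ length s"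
proof (induction s)
  case Nil
  then show ?case
    using root_in_P by simp
next
  case (Cons z s)
  then have "subball_family (fst (tree s)) (snd (tree s)) (children (fst (tree s)) (snd (tree s)))"
    by (intro subball_family_children) auto
  then have "fst (tree (z # s)) \<in> P \<and> 0 < snd (tree (z # s)) \<and> snd (tree (z # s)) \<le> snd (tree s) / 2"
    unfolding subball_family_def by simp
  with Cons show ?case
    by (simp add: divide_right_mono order_trans)
qed

lemma subball_family_tree:
  "subball_family (fst (tree s)) (snd (tree s)) (children (fst (tree s)) (snd (tree s)))"
  using tree_bounds by (intro subball_family_children) auto

lemma cell_ball_Cons_subset: "cell_ball (z # s) \<subseteq> cell_ball s"
  using subball_family_tree [of s] by (simp add: subball_family_def cell_ball_def)

lemma tree_designated_digit: "fst (tree (designated_digit s # s)) = fst (tree s)"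
  using subball_family_tree [of s] by (simp add: subball_family_def)

lemma cell_ball_disjoint:
  "length s = length s' \<Longrightarrow> s \<noteq> s' \<Longrightarrow> cell_ball s \<inter> cell_ball s' = {}"
proof (induction s arbitrary: s')
  case (Cons z s)
  then obtain z' t where s': "s' = z' # t"
    by (cases s') auto
  show ?case
  proof (cases "s = t")
    case True
    then have "digit_index (designated_digit s) z \<noteq> digit_index (designated_digit s) z'"
      using Cons.prems s' by (simp add: digit_index_inject)
    then show ?thesis
      using subball_family_tree [of s]
      by (auto simp: subball_family_def disjoint_family_on_def cell_ball_def s' True [symmetric])
  next
    case False
    then show ?thesis
      using Cons cell_ball_Cons_subset [of z s] cell_ball_Cons_subset [of z' t] s' by fastforce
  qed
qed simp

lemma cell_ball_cell_path_antimono: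
  "m \<le> n \<Longrightarrow> cell_ball (cell_path q n) \<subseteq> cell_ball (cell_path q m)"
  by (induction n rule: dec_induct) (use cell_ball_Cons_subset in auto)

definition stable_level :: "real \<Rightarrow> nat" where
  "stable_level q = (SOME N. \<forall>n\<ge>N. designated_digit (cell_path q n) = dyadic_cell n q)"

definition embed :: "real \<Rightarrow> 'a" where
  "embed q = fst (tree (cell_path q (stable_level q)))"

lemma tree_cell_path_stable:
  assumes "q \<in> \<rat>" and "stable_level q \<le> n"
  shows "fst (tree (cell_path q n)) = embed q"
proof -
  have "\<exists>N. \<forall>n\<ge>N. designated_digit (cell_path q n) = dyadic_cell n q"
    using eventually_designated_digit [OF assms(1)] by (simp add: eventually_sequentially)
  then have stable: "\<forall>n\<ge>stable_level q. designated_digit (cell_path q n) = dyadic_cell n q"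
    unfolding stable_level_def by (rule someI_ex)
  from assms(2) show ?thesis
  proof (induction n rule: dec_induct)
    case (step n)
    then have "cell_path q (Suc n) = designated_digit (cell_path q n) # cell_path q n"
      using stable by simp
    then show ?case
      using step.IH by (simp only: tree_designated_digit)
  qed (simp add: embed_def)
qed

lemma embed_in_P: "embed q \<in> P"
  unfolding embed_def using tree_bounds by blast

lemma embed_in_cell_ball:
  assumes "q \<in> \<rat>"
  shows "embed q \<in> cell_ball (cell_path q n)"
proof -
  let ?m = "max n (stable_level q)"
  have "embed q \<in> cell_ball (cell_path q ?m)"
    using tree_cell_path_stable [OF assms, of ?m] tree_bounds [of "cell_path q ?m"] P_subset
    by (auto simp: cell_ball_def)
  then show ?thesis
    using cell_ball_cell_path_antimono [of n ?m q] by auto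
qed

lemma embed_in_cell_ball_iff:
  assumes "q \<in> \<rat>" and "q' \<in> \<rat>"
  shows "embed q' \<in> cell_ball (cell_path q n) \<longleftrightarrow> cell_path q' n = cell_path q n"
  using embed_in_cell_ball [OF assms(2), of n] cell_ball_disjoint [of "cell_path q' n" "cell_path q n"]
  by auto

lemma dist_embed_less:
  assumes "q \<in> \<rat>" and "q' \<in> \<rat>" and "cell_path q' n = cell_path q n"
  shows "d (embed q) (embed q') < 2 / 2 ^ n"
proof -
  let ?c = "fst (tree (cell_path q n))" and ?r = "snd (tree (cell_path q n))"
  have "embed q \<in> mball ?c ?r" and "embed q' \<in> mball ?c ?r"
    using embed_in_cell_ball_iff [OF assms(1)] assms by (auto simp: cell_ball_def)
  moreover have "?r \<le> 1 / 2 ^ n"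
    using tree_bounds [of "cell_path q n"] by simp
  ultimately show ?thesis
    using triangle [of "embed q" ?c "embed q'"] commute [of "embed q" ?c] by auto
qed

lemma inj_on_embed: "inj_on embed \<rat>"
proof
  fix a b assume ab: "a \<in> \<rat>" "b \<in> \<rat>" "embed a = embed b"
  have close: "\<bar>b - a\<bar> < 1 / 2 ^ n" for n
    using embed_in_cell_ball_iff [of a b "Suc n"] embed_in_cell_ball [of a "Suc n"] ab
    by (intro abs_diff_less_if_cell_path_eq [of _ "Suc n"]) auto
  show "a = b"
  proof (rule ccontr)
    assume "a \<noteq> b"
    then obtain n where "1 / 2 ^ n < \<bar>b - a\<bar>"
      using ex_inverse_two_power_less [of "\<bar>b - a\<bar>"] by auto
    then show False
      using close [of n] by simp
  qed
qed

lemma continuous_map_embed: "continuous_map (top_of_set \<rat>) mtopology embed"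
  unfolding continuous_map_to_metric
proof (intro ballI allI impI)
  fix q e :: real assume "q \<in> topspace (top_of_set \<rat>)" and "0 < e"
  then have q: "q \<in> \<rat>"
    by simp
  obtain n where "1 / 2 ^ n < e / 2"
    using ex_inverse_two_power_less [of "e / 2"] \<open>0 < e\<close> by auto
  then have n: "2 / 2 ^ n < e"
    by (simp add: field_simps)
  show "\<exists>U. openin (top_of_set \<rat>) U \<and> q \<in> U \<and> (\<forall>y\<in>U. embed y \<in> mball (embed q) e)"
  proof (intro exI conjI ballI)
    show "openin (top_of_set \<rat>) {y \<in> \<rat>. cell_path y n = cell_path q n}"
      by (rule openin_cell_path_fibre)
    show "q \<in> {y \<in> \<rat>. cell_path y n = cell_path q n}"
      using q by simp
    fix y assume "y \<in> {y \<in> \<rat>. cell_path y n = cell_path q n}"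
    then show "embed y \<in> mball (embed q) e"
      using dist_embed_less [OF q, of y n] n embed_in_P P_subset by auto
  qed
qed

lemma continuous_map_inv_embed:
  "continuous_map (subtopology mtopology (embed ` \<rat>)) (top_of_set \<rat>) (inv_into \<rat> embed)"
proof -
  have "continuous_map (subtopology mtopology (embed ` \<rat>)) Met_TC.mtopology (inv_into \<rat> embed)"
    unfolding Met_TC.continuous_map_to_metric
  proof (intro ballI allI impI)
    fix a and e :: real assume "a \<in> topspace (subtopology mtopology (embed ` \<rat>))" and "0 < e"
    then obtain q where q: "q \<in> \<rat>" "a = embed q"
      by auto
    obtain n where n: "1 / 2 ^ n < e"
      using ex_inverse_two_power_less [OF \<open>0 < e\<close>] by blast
    let ?U = "embed ` \<rat> \<inter> cell_ball (cell_path q (Suc n))"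
    show "\<exists>U. openin (subtopology mtopology (embed ` \<rat>)) U \<and> a \<in> U \<and>
              (\<forall>b\<in>U. inv_into \<rat> embed b \<in> Met_TC.mball (inv_into \<rat> embed a) e)"
    proof (intro exI conjI ballI)
      show "openin (subtopology mtopology (embed ` \<rat>)) ?U"
        unfolding cell_ball_def by (intro openin_subtopology_Int2 openin_mball)
      show "a \<in> ?U"
        using q embed_in_cell_ball by blast
      fix b assume "b \<in> ?U"
      then obtain q' where q': "q' \<in> \<rat>" "b = embed q'" "cell_path q' (Suc n) = cell_path q (Suc n)"
        using embed_in_cell_ball_iff [OF q(1)] by blast
      then have "\<bar>q' - q\<bar> < e"
        using abs_diff_less_if_cell_path_eq [of q' "Suc n" q n] n by simp
      then show "inv_into \<rat> embed b \<in> Met_TC.mball (inv_into \<rat> embed a) e"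
        using q q' inj_on_embed by (simp add: dist_real_def abs_minus_commute)
    qed
  qed
  then show ?thesis
    by (auto simp: continuous_map_in_subtopology inv_into_into)
qed

lemma embed_homeomorphic_rationals:
  "subtopology mtopology (embed ` \<rat>) homeomorphic_space top_of_set (\<rat> :: real set)"
proof -
  have "homeomorphic_maps (top_of_set \<rat>) (subtopology mtopology (embed ` \<rat>)) embed (inv_into \<rat> embed)"
    unfolding homeomorphic_maps_def
    using continuous_map_into_subtopology [OF continuous_map_embed] continuous_map_inv_embed inj_on_embed
    by auto
  then show ?thesis
    using homeomorphic_maps_imp_homeomorphic_space homeomorphic_space_sym by blast
qed

end

lemma (in Metric_space) dense_in_itself_contains_rationals:
  assumes "P \<subseteq> mtopology derived_set_of P" and "P \<noteq> {}"
  shows "\<exists>S\<subseteq>P. subtopology mtopology S homeomorphic_space top_of_set (\<rat> :: real set)"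
proof -
  obtain root where "root \<in> P"
    using assms(2) by blast
  then interpret dense_in_itself_set M d P root
    using assms(1) by unfold_locales
  show ?thesis
    using embed_homeomorphic_rationals embed_in_P by blast
qed

lemma Rats_derived_set_of: "top_of_set \<rat> derived_set_of (\<rat> :: real set) = \<rat>"
proof -
  have "\<not> openin (top_of_set \<rat>) {q}" if "q \<in> \<rat>" for q :: real
  proof
    assume "openin (top_of_set \<rat>) {q}"
    then obtain e where "0 < e" and e: "\<forall>y\<in>\<rat>. dist y q < e \<longrightarrow> y = q"
      unfolding openin_euclidean_subtopology_iff by auto
    obtain r where "r \<in> \<rat>" "q < r" "r < q + e"
      using Rats_dense_in_real [of q "q + e"] \<open>0 < e\<close> by auto
    with e show False
      by (auto simp: dist_real_def)
  qed
  then show ?thesis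
    using derived_set_of_topspace [of "top_of_set \<rat>"] by auto
qed

lemma homeomorphic_rationals_imp_dense_in_itself:
  assumes "subtopology X S homeomorphic_space top_of_set (\<rat> :: real set)" and "S \<subseteq> topspace X"
  shows "S \<noteq> {} \<and> S \<subseteq> X derived_set_of S"
proof -
  have "top_of_set (\<rat> :: real set) homeomorphic_space subtopology X S"
    using assms(1) by (rule homeomorphic_space_sym [THEN iffD1])
  then obtain f where f: "homeomorphic_map (top_of_set (\<rat> :: real set)) (subtopology X S) f"
    unfolding homeomorphic_space by blast
  have image: "f ` \<rat> = S"
    using homeomorphic_imp_surjective_map [OF f] assms(2) by (simp add: Int_absorb1)
  then have "subtopology X S derived_set_of S = S"
    using homeomorphic_map_derived_set_of [OF f, of \<rat>] by (simp add: Rats_derived_set_of)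
  then have "S \<inter> X derived_set_of S = S"
    by (simp add: derived_set_of_subtopology)
  then have "S \<subseteq> X derived_set_of S"
    by blast
  moreover have "S \<noteq> {}"
    using image Rats_0 by blast
  ultimately show ?thesis
    by blast
qed

lemma scat_plus_iff_image:
  "A \<in> scat_plus X x \<longleftrightarrow> (\<exists>S\<subseteq>x ` A. subtopology X S homeomorphic_space top_of_set (\<rat> :: real set))"
  by (auto simp: scat_plus_def scat_ideal_def scattered_idx_def subset_image_iff)

lemma scat_plus_iff_dense_in_itself:
  assumes "Metric_space (range x) d"
    and "Metric_space.mtopology (range x) d = subtopology X (range x)"
  shows "A \<in> scat_plus X x \<longleftrightarrow>
    (\<exists>B\<subseteq>A. B \<noteq> {} \<and> x ` B \<subseteq> Metric_space.mtopology (range x) d derived_set_of (x ` B))"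
proof -
  interpret Metric_space "range x" d
    by (rule assms(1))
  have "subtopology X S = subtopology mtopology S" if "S \<subseteq> x ` A" for S
  proof -
    have "range x \<inter> S = S"
      using that by auto
    then show ?thesis
      by (simp add: assms(2) subtopology_subtopology)
  qed
  then have "A \<in> scat_plus X x \<longleftrightarrow>
      (\<exists>S\<subseteq>x ` A. subtopology mtopology S homeomorphic_space top_of_set (\<rat> :: real set))"
    unfolding scat_plus_iff_image by (metis (no_types, lifting))
  also have "\<dots> \<longleftrightarrow> (\<exists>S\<subseteq>x ` A. S \<noteq> {} \<and> S \<subseteq> mtopology derived_set_of S)"
    using homeomorphic_rationals_imp_dense_in_itself [of mtopology] dense_in_itself_contains_rationals
    by (metis image_subset_iff rangeI subset_trans topspace_mtopology)
  also have "\<dots> \<longleftrightarrow> (\<exists>B\<subseteq>A. B \<noteq> {} \<and> x ` B \<subseteq> mtopology derived_set_of (x ` B))"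
    unfolding subset_image_iff by auto
  finally show ?thesis .
qed

context Metric_space
begin

lemma ballA_dense_in_itself_iff:
  assumes "inj_on x B" and "x ` B \<subseteq> M"
  shows "(\<forall>i\<in>B. \<forall>j. \<exists>n\<in>B \<inter> ballA d x i j. n \<noteq> i) \<longleftrightarrow> x ` B \<subseteq> mtopology derived_set_of (x ` B)"
proof
  assume dense: "\<forall>i\<in>B. \<forall>j. \<exists>n\<in>B \<inter> ballA d x i j. n \<noteq> i"
  show "x ` B \<subseteq> mtopology derived_set_of (x ` B)"
  proof
    fix p assume "p \<in> x ` B"
    then obtain i where i: "i \<in> B" "p = x i"
      by blast
    have "\<exists>y\<in>x ` B. y \<noteq> x i \<and> y \<in> mball (x i) r" if r: "0 < r" for r
    proof -
      obtain j where j: "inverse (real (Suc j)) < r"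
        using reals_Archimedean [OF r] by blast
      obtain n where n: "n \<in> B" "d (x n) (x i) < 1 / (real j + 1)" "n \<noteq> i"
        using dense i(1) unfolding ballA_def by blast
      have "x n \<noteq> x i"
        using assms(1) n(1,3) i(1) by (simp add: inj_on_eq_iff)
      moreover have "1 / (real j + 1) = inverse (real (Suc j))"
        by (simp add: inverse_eq_divide)
      then have "d (x i) (x n) < r"
        using n(2) j commute [of "x i" "x n"] by linarith
      then have "x n \<in> mball (x i) r"
        using n(1) i(1) assms(2) by auto
      ultimately show ?thesis
        using n(1) by blast
    qed
    moreover have "x i \<in> M"
      using i(1) assms(2) by blast
    ultimately show "p \<in> mtopology derived_set_of (x ` B)"
      unfolding metric_derived_set_of i(2) by blast
  qed
next
  assume dense: "x ` B \<subseteq> mtopology derived_set_of (x ` B)"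
  show "\<forall>i\<in>B. \<forall>j. \<exists>n\<in>B \<inter> ballA d x i j. n \<noteq> i"
  proof (intro ballI allI)
    fix i j assume "i \<in> B"
    then have "\<forall>r>0. \<exists>y\<in>x ` B. y \<noteq> x i \<and> y \<in> mball (x i) r"
      using dense by (auto simp: metric_derived_set_of)
    moreover have "0 < 1 / (real j + 1)"
      by simp
    ultimately obtain y where "y \<in> x ` B" "y \<noteq> x i" "y \<in> mball (x i) (1 / (real j + 1))"
      by blast
    then obtain n where "n \<in> B" "x n \<noteq> x i" "x n \<in> mball (x i) (1 / (real j + 1))"
      by blast
    then show "\<exists>n\<in>B \<inter> ballA d x i j. n \<noteq> i"
      by (auto simp: ballA_def commute)
  qed
qed

lemma dense_in_itself_Int_mball:
  assumes "S \<subseteq> mtopology derived_set_of S"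
  shows "S \<inter> mball c r \<subseteq> mtopology derived_set_of (S \<inter> mball c r)"
proof -
  have "S \<inter> mball c r \<subseteq> mball c r \<inter> mtopology derived_set_of S"
    using assms by blast
  also have "\<dots> \<subseteq> mtopology derived_set_of (mball c r \<inter> S)"
    by (rule openin_Int_derived_set_of_subset [OF openin_mball])
  finally show ?thesis
    by (simp only: Int_commute)
qed

lemma image_Int_ballA:
  assumes "x ` B \<subseteq> M" and "x i \<in> M"
  shows "x ` (B \<inter> ballA d x i j) = x ` B \<inter> mball (x i) (1 / (real j + 1))"
  using assms by (auto simp: ballA_def commute)

end

lemma scat_plus_Int_ballA:
  assumes metric: "Metric_space (range x) d"
    and compat: "Metric_space.mtopology (range x) d = subtopology X (range x)"
    and "i \<in> B" and dense: "x ` B \<subseteq> Metric_space.mtopology (range x) d derived_set_of (x ` B)"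
  shows "B \<inter> ballA d x i j \<in> scat_plus X x"
proof -
  interpret Metric_space "range x" d
    by (rule metric)
  have "x ` (B \<inter> ballA d x i j) = x ` B \<inter> mball (x i) (1 / (real j + 1))"
    by (rule image_Int_ballA) auto
  moreover have "i \<in> B \<inter> ballA d x i j"
    using \<open>i \<in> B\<close> by (simp add: ballA_def)
  ultimately have "x ` (B \<inter> ballA d x i j) \<subseteq> mtopology derived_set_of (x ` (B \<inter> ballA d x i j))"
    and "B \<inter> ballA d x i j \<noteq> {}"
    using dense_in_itself_Int_mball [OF dense] by auto
  then show ?thesis
    unfolding scat_plus_iff_dense_in_itself [OF metric compat] by blast
qed

theorem mainTheorem1:
  fixes X :: "'a topology" and x :: "nat \<Rightarrow> 'a" and d :: "'a \<Rightarrow> 'a \<Rightarrow> real"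
  assumes inj: "inj x"
    and inX: "range x \<subseteq> topspace X"
    and homQ: "subtopology X (range x) homeomorphic_space top_of_set (\<rat> :: real set)"
    and metric: "Metric_space (range x) d"
    and compat: "Metric_space.mtopology (range x) d = subtopology X (range x)"
  shows "(\<forall>A. A \<in> scat_plus X x \<longleftrightarrow>
            (\<exists>B. B \<noteq> {} \<and> B \<subseteq> A \<and>
                 (\<forall>i\<in>B. \<forall>j. \<exists>n\<in>B \<inter> ballA d x i j. n \<noteq> i)))
       \<and> (\<forall>A\<in>scat_plus X x. \<exists>B. B \<subseteq> A \<and> B \<in> scat_plus X x \<and>
            (\<forall>i\<in>B. \<forall>j. B \<inter> ballA d x i j \<in> scat_plus X x))"
proof -
  interpret Metric_space "range x" d
    by (rule metric)
  note plus_iff = scat_plus_iff_dense_in_itself [OF metric compat]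
  have dense_iff: "(\<forall>i\<in>B. \<forall>j. \<exists>n\<in>B \<inter> ballA d x i j. n \<noteq> i) \<longleftrightarrow>
      x ` B \<subseteq> mtopology derived_set_of (x ` B)" for B
    using inj by (intro ballA_dense_in_itself_iff) (auto intro: inj_on_subset)
  show ?thesis
  proof (intro conjI allI ballI)
    fix A
    show "A \<in> scat_plus X x \<longleftrightarrow> (\<exists>B. B \<noteq> {} \<and> B \<subseteq> A \<and> (\<forall>i\<in>B. \<forall>j. \<exists>n\<in>B \<inter> ballA d x i j. n \<noteq> i))"
      unfolding plus_iff dense_iff by blast
  next
    fix A assume "A \<in> scat_plus X x"
    then obtain B where B: "B \<subseteq> A" "B \<noteq> {}" "x ` B \<subseteq> mtopology derived_set_of (x ` B)"
      unfolding plus_iff by blast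
    then have "B \<in> scat_plus X x"
      unfolding plus_iff by blast
    with B scat_plus_Int_ballA [OF metric compat] show "\<exists>B. B \<subseteq> A \<and> B \<in> scat_plus X x \<and> (\<forall>i\<in>B. \<forall>j. B \<inter> ballA d x i j \<in> scat_plus X x)"
      by (intro exI [of _ B]) simp
  qed
qed

end
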